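(* For every integer $n\ge1$ and every integer $j$ with $1\le j\le n$, setting $\mathcal{B}_{m,i}=\sum_{k=i}^{m}(-1)^{k-i}{m\brace k}{k\brack i}H_k$, one has \[ \mathcal{B}_{n+1,j}=\mathcal{B}_{n,j-1}+\binom{n}{j}\frac{B_{n+1-j}}{n+1-j}. \]
   Context: $B_m$ denotes the $m$th Bernoulli number, defined by $\frac{t}{e^t-1}=\sum_{m\ge0}B_m\frac{t^m}{m!}$. ${k\brack j}$ denotes the unsigned Stirling number of the first kind ($x(x+1)\cdots(x+k-1)=\sum_j{k\brack j}x^j$), ${n\brace k}$ the Stirling number of the second kind ($x^n=\sum_k(-1)^{n-k}{n\brace k}x(x+1)\cdots(x+k-1)$), and $H_k=\sum_{i=1}^k 1/i$ the $k$th harmonic number, $H_0=0$. *)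

theory Defs
  imports "HOL-Analysis.Analysis" "HOL-Combinatorics.Stirling"
begin

text \<open>Bernoulli numbers with B_1 = -1/2, i.e. t/(e^t-1) = sum B_m t^m/m!.
  Defined by the recursion equivalent to this generating function:
  B_0 = 1 and B_m = -(1/(m+1)) * sum_{k<m} C(m+1,k) B_k.\<close>
fun bernoulli :: "nat \<Rightarrow> real" where
  "bernoulli m = (if m = 0 then 1 else
     - (\<Sum>k<m. real ((m + 1) choose k) * (if k < m then bernoulli k else 0)) / real (m + 1))"

definition calB :: "nat \<Rightarrow> nat \<Rightarrow> real" where
  "calB m i = (\<Sum>k=i..m. (-1) ^ (k - i) * real (Stirling m k) * real (stirling k i) * harm k)"

end

theory Submission
  imports Defs "HOL-Computational_Algebra.Polynomial"
begin

text \<open>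
  Summing out the Stirling numbers of the first kind turns the generating polynomial
  \<open>calB_poly m = \<Sum>i. calB m i x^i\<close> into \<open>\<Sum>k. S(m,k) H_k ffact k x\<close>. The recurrence
  \<open>S(n+1,k+1) = (k+1) S(n,k+1) + S(n,k)\<close> together with \<open>H_(k+1) = H_k + 1/(k+1)\<close> then gives
  \<open>calB_poly (n+1) x - x calB_poly n x = \<Sum>k. S(n,k) ffact (k+1) x / (k+1)\<close>. At a natural
  number \<open>x\<close> this is \<open>\<Sum>t<x. t^n\<close>, because \<open>ffact (k+1) x / (k+1)\<close> is the discrete
  antiderivative of \<open>ffact k x\<close> and \<open>t^n = \<Sum>k. S(n,k) ffact k t\<close>. By Faulhaber's formula
  that sum is \<open>(bernpoly (n+1) x - B_(n+1)) / (n+1)\<close>. Two polynomials agreeing on all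
  natural numbers are equal, and comparing the coefficients of \<open>x^j\<close> gives the theorem.
\<close>

definition ffact :: "nat \<Rightarrow> 'a::comm_ring_1 \<Rightarrow> 'a" where
  "ffact k x = (\<Prod>i<k. x - of_nat i)"

lemma ffact_0 [simp]: "ffact 0 x = 1"
  by (simp add: ffact_def)

lemma ffact_Suc: "ffact (Suc k) x = ffact k x * (x - of_nat k)"
  by (simp add: ffact_def)

lemma ffact_Suc_shift: "ffact (Suc k) x = x * ffact k (x - 1)"
  by (simp add: ffact_def prod.lessThan_Suc_shift algebra_simps del: prod.lessThan_Suc)

lemma ffact_eq_pochhammer: "ffact k x = (-1) ^ k * pochhammer (-x) k"
  by (induction k) (simp_all add: ffact_Suc pochhammer_Suc algebra_simps)

lemma sum_stirling_eq_ffact: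
  fixes x :: "'a::comm_ring_1"
  assumes "k \<le> m"
  shows "(\<Sum>i\<le>m. (-1) ^ (k - i) * of_nat (stirling k i) * x ^ i) = ffact k x"
proof -
  have "(\<Sum>i\<le>m. (-1) ^ (k - i) * of_nat (stirling k i) * x ^ i)
      = (\<Sum>i\<le>k. (-1) ^ k * (of_nat (stirling k i) * (-x) ^ i))"
  proof (rule sum.mono_neutral_cong_right)
    fix i assume "i \<in> {..k}"
    then have "(-1 :: 'a) ^ k = (-1) ^ (k - i) * (-1) ^ i"
      by (simp flip: power_add)
    then show "(-1) ^ (k - i) * of_nat (stirling k i) * x ^ i
             = (-1) ^ k * (of_nat (stirling k i) * (-x) ^ i)"
      by (simp add: power_minus[of x] algebra_simps)
  qed (use assms in auto)
  also have "\<dots> = ffact k x"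
    by (simp add: ffact_eq_pochhammer stirling_pochhammer flip: sum_distrib_left)
  finally show ?thesis .
qed

lemma power_eq_sum_Stirling_ffact:
  "(x :: 'a::comm_ring_1) ^ n = (\<Sum>k\<le>n. of_nat (Stirling n k) * ffact k x)"
proof (induction n)
  case (Suc n)
  have shift: "(\<Sum>k\<le>n. of_nat (Suc k * Stirling n (Suc k)) * ffact (Suc k) x)
             = (\<Sum>k\<le>n. of_nat (k * Stirling n k) * ffact k x)"
    using sum.atMost_Suc_shift[of "\<lambda>k. of_nat (k * Stirling n k) * ffact k x" n] by simp
  have "(\<Sum>k\<le>Suc n. of_nat (Stirling (Suc n) k) * ffact k x)
      = (\<Sum>k\<le>n. of_nat (Suc k * Stirling n (Suc k) + Stirling n k) * ffact (Suc k) x)"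
    by (subst sum.atMost_Suc_shift) simp
  also have "\<dots> = (\<Sum>k\<le>n. of_nat (Suc k * Stirling n (Suc k)) * ffact (Suc k) x)
                 + (\<Sum>k\<le>n. of_nat (Stirling n k) * ffact (Suc k) x)"
    by (simp only: of_nat_add distrib_right sum.distrib)
  also have "\<dots> = (\<Sum>k\<le>n. of_nat (Stirling n k) * (of_nat k * ffact k x + ffact (Suc k) x))"
    unfolding shift by (simp add: sum.distrib algebra_simps)
  also have "\<dots> = x * x ^ n"
    by (simp add: Suc ffact_Suc sum_distrib_left algebra_simps)
  finally show ?case by simp
qed simp

lemma sum_ffact_of_nat:
  "of_nat (Suc k) * (\<Sum>t<x. ffact k (of_nat t)) = (ffact (Suc k) (of_nat x) :: 'a::comm_ring_1)"
proof (induction x)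
  case (Suc x)
  have "ffact (Suc k) (of_nat (Suc x)) = (1 + of_nat x) * (ffact k (of_nat x) :: 'a)"
    by (simp add: ffact_Suc_shift)
  with Suc show ?case
    by (simp add: distrib_left ffact_Suc algebra_simps)
qed (simp add: ffact_Suc_shift)

declare bernoulli.simps [simp del]

lemma bernoulli_recurrence:
  assumes "m > 0"
  shows "(\<Sum>k\<le>m. real (Suc m choose k) * bernoulli k) = 0"
proof -
  have "real (Suc m) * bernoulli m = - (\<Sum>k<m. real (Suc m choose k) * bernoulli k)"
  proof -
    have "(\<Sum>k<m. real (Suc m choose k) * (if k < m then bernoulli k else 0))
        = (\<Sum>k<m. real (Suc m choose k) * bernoulli k)"
      by (rule sum.cong) auto
    with assms show ?thesis
      by (subst bernoulli.simps) simp
  qed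
  then show ?thesis
    by (simp add: lessThan_Suc_atMost [symmetric] binomial_symmetric [of m "Suc m"])
qed

lemma bernoulli_binomial_sum:
  "(\<Sum>k\<le>p. real (p choose k) * bernoulli k) = bernoulli p + (if p = 1 then 1 else 0)"
proof -
  consider "p = 0" | "p = 1" | m where "p = Suc m" "m > 0"
    by (metis One_nat_def gr0I old.nat.exhaust)
  then show ?thesis
  proof cases
    case 3
    then show ?thesis
      using bernoulli_recurrence [of m] by simp
  qed (simp_all add: bernoulli.simps)
qed

lemma sum_binomial_binomial_bernoulli:
  assumes "l \<le> m"
  shows "(\<Sum>i\<le>m. real (m choose i) * real (i choose l) * bernoulli (m - i))
       = real (m choose l) * (bernoulli (m - l) + (if m - l = 1 then 1 else 0))"
proof -
  have "(\<Sum>i\<le>m. real (m choose i) * real (i choose l) * bernoulli (m - i))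
      = (\<Sum>i\<in>{l..m}. real (m choose l) * (real ((m - l) choose (m - i)) * bernoulli (m - i)))"
  proof (rule sum.mono_neutral_cong_right)
    fix i assume i: "i \<in> {l..m}"
    have "(m choose i) * (i choose l) = (m choose l) * ((m - l) choose (i - l))"
      using i by (intro choose_mult) auto
    also have "(m - l) choose (i - l) = (m - l) choose (m - i)"
      using i by (subst binomial_symmetric) (auto simp: Suc_diff_le)
    finally show "real (m choose i) * real (i choose l) * bernoulli (m - i)
        = real (m choose l) * (real ((m - l) choose (m - i)) * bernoulli (m - i))"
      by (simp flip: of_nat_mult)
  qed auto
  also have "\<dots> = real (m choose l) * (\<Sum>j\<le>m - l. real ((m - l) choose j) * bernoulli j)"
    unfolding sum_distrib_left
    by (rule sum.reindex_bij_witness [of _ "\<lambda>j. m - j" "\<lambda>i. m - i"]) (use assms in auto)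
  finally show ?thesis
    by (simp add: bernoulli_binomial_sum)
qed

definition bernpoly :: "nat \<Rightarrow> real poly" where
  "bernpoly m = (\<Sum>i\<le>m. monom (real (m choose i) * bernoulli (m - i)) i)"

lemma coeff_bernpoly: "coeff (bernpoly m) i = real (m choose i) * bernoulli (m - i)"
  by (simp add: bernpoly_def coeff_sum coeff_monom)

lemma poly_bernpoly:
  "poly (bernpoly m) x = (\<Sum>i\<le>m. real (m choose i) * bernoulli (m - i) * x ^ i)"
  by (simp add: bernpoly_def poly_sum poly_monom)

lemma poly_bernpoly_plus_1:
  assumes "m > 0"
  shows "poly (bernpoly m) (x + 1) = poly (bernpoly m) x + real m * x ^ (m - 1)"
proof -
  have "poly (bernpoly m) (x + 1)
      = (\<Sum>i\<le>m. \<Sum>l\<le>m. real (m choose i) * real (i choose l) * bernoulli (m - i) * x ^ l)"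
    unfolding poly_bernpoly
  proof (rule sum.cong)
    fix i assume "i \<in> {..m}"
    then have "(x + 1) ^ i = (\<Sum>l\<le>m. real (i choose l) * x ^ l)"
      by (subst binomial_ring) (auto intro!: sum.mono_neutral_left)
    then show "real (m choose i) * bernoulli (m - i) * (x + 1) ^ i
        = (\<Sum>l\<le>m. real (m choose i) * real (i choose l) * bernoulli (m - i) * x ^ l)"
      by (simp add: sum_distrib_left mult_ac)
  qed simp
  also have "\<dots> = (\<Sum>l\<le>m. real (m choose l)
                          * (bernoulli (m - l) + (if m - l = 1 then 1 else 0)) * x ^ l)"
    by (subst sum.swap) (simp add: sum_binomial_binomial_bernoulli flip: sum_distrib_right)
  also have "\<dots> = poly (bernpoly m) x
                 + (\<Sum>l\<le>m. if l = m - 1 then real (m choose l) * x ^ l else 0)"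
    unfolding poly_bernpoly sum.distrib [symmetric]
    by (rule sum.cong) (use assms in \<open>auto simp: algebra_simps\<close>)
  also have "(\<Sum>l\<le>m. if l = m - 1 then real (m choose l) * x ^ l else 0) = real m * x ^ (m - 1)"
    using assms binomial_symmetric [of 1 m] by simp
  finally show ?thesis .
qed

lemma sum_powers_bernpoly:
  "real (Suc n) * (\<Sum>t<x. real t ^ n) = poly (bernpoly (Suc n)) (real x) - bernoulli (Suc n)"
proof (induction x)
  case 0
  show ?case
    by (simp add: poly_0_coeff_0 coeff_bernpoly)
next
  case (Suc x)
  then show ?case
    using poly_bernpoly_plus_1 [of "Suc n" "real x"] by (simp add: algebra_simps)
qed

lemma calB_eq_sum_atMost:
  "calB m i = (\<Sum>k\<le>m. (-1) ^ (k - i) * real (Stirling m k) * real (stirling k i) * harm k)"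
  unfolding calB_def by (rule sum.mono_neutral_left) auto

definition calB_poly :: "nat \<Rightarrow> real poly" where
  "calB_poly m = (\<Sum>i\<le>m. monom (calB m i) i)"

lemma coeff_calB_poly: "coeff (calB_poly m) i = calB m i"
  by (auto simp: calB_poly_def coeff_sum coeff_monom calB_def)

lemma poly_calB_poly:
  "poly (calB_poly m) x = (\<Sum>k\<le>m. real (Stirling m k) * harm k * ffact k x)"
proof -
  have "poly (calB_poly m) x
      = (\<Sum>k\<le>m. real (Stirling m k) * harm k
                    * (\<Sum>i\<le>m. (-1) ^ (k - i) * real (stirling k i) * x ^ i))"
    unfolding calB_poly_def poly_sum poly_monom calB_eq_sum_atMost
      sum_distrib_left sum_distrib_right
    by (subst sum.swap) (simp add: mult_ac)
  then show ?thesis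
    by (simp add: sum_stirling_eq_ffact)
qed

lemma poly_calB_poly_Suc:
  "poly (calB_poly (Suc n)) x
     = x * poly (calB_poly n) x + (\<Sum>k\<le>n. real (Stirling n k) * ffact (Suc k) x / real (Suc k))"
proof -
  have shift: "(\<Sum>k\<le>n. real (Suc k * Stirling n (Suc k)) * harm (Suc k) * ffact (Suc k) x)
             = (\<Sum>k\<le>n. real (k * Stirling n k) * harm k * ffact k x)"
    using sum.atMost_Suc_shift[of "\<lambda>k. real (k * Stirling n k) * harm k * ffact k x" n] by simp
  have "poly (calB_poly (Suc n)) x
      = (\<Sum>k\<le>n. real (Suc k * Stirling n (Suc k) + Stirling n k) * harm (Suc k) * ffact (Suc k) x)"
    unfolding poly_calB_poly by (subst sum.atMost_Suc_shift) simp
  also have "\<dots> = (\<Sum>k\<le>n. real (Suc k * Stirling n (Suc k)) * harm (Suc k) * ffact (Suc k) x)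
                 + (\<Sum>k\<le>n. real (Stirling n k) * harm (Suc k) * ffact (Suc k) x)"
    by (simp only: of_nat_add distrib_right sum.distrib)
  also have "\<dots> = (\<Sum>k\<le>n. real (Stirling n k) * harm k * (real k * ffact k x + ffact (Suc k) x))
                 + (\<Sum>k\<le>n. real (Stirling n k) * ffact (Suc k) x / real (Suc k))"
    unfolding shift sum.distrib [symmetric]
    by (rule sum.cong) (simp_all add: harm_Suc field_simps)
  also have "(\<Sum>k\<le>n. real (Stirling n k) * harm k * (real k * ffact k x + ffact (Suc k) x))
           = x * poly (calB_poly n) x"
    by (simp add: poly_calB_poly ffact_Suc sum_distrib_left algebra_simps)
  finally show ?thesis .
qed

lemma sum_powers_eq_sum_Stirling_ffact:
  "(\<Sum>t<x. real t ^ n) = (\<Sum>k\<le>n. real (Stirling n k) * ffact (Suc k) (real x) / real (Suc k))"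
proof -
  have "(\<Sum>t<x. real t ^ n) = (\<Sum>k\<le>n. real (Stirling n k) * (\<Sum>t<x. ffact k (real t)))"
    by (simp add: power_eq_sum_Stirling_ffact sum_distrib_left) (rule sum.swap)
  also have "\<dots> = (\<Sum>k\<le>n. real (Stirling n k) * ffact (Suc k) (real x) / real (Suc k))"
    by (simp add: sum_ffact_of_nat [symmetric])
  finally show ?thesis .
qed

lemma poly_eqI_of_nat:
  fixes p q :: "'a::{idom, ring_char_0} poly"
  assumes "\<And>x. poly p (of_nat x) = poly q (of_nat x)"
  shows "p = q"
proof (rule ccontr)
  assume "p \<noteq> q"
  then have "finite {x. poly (p - q) x = 0}"
    by (intro poly_roots_finite) simp
  moreover have "range of_nat \<subseteq> {x. poly (p - q) x = 0}"
    using assms by auto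
  ultimately show False
    using finite_subset range_inj_infinite [OF inj_of_nat] by blast
qed

lemma calB_poly_Suc:
  "calB_poly (Suc n)
     = pCons 0 (calB_poly n) + smult (1 / real (Suc n)) (bernpoly (Suc n) - [:bernoulli (Suc n):])"
proof (rule poly_eqI_of_nat)
  fix x :: nat
  have "real (Suc n) * (\<Sum>t<x. real t ^ n) = poly (bernpoly (Suc n)) (real x) - bernoulli (Suc n)"
    by (rule sum_powers_bernpoly)
  then show "poly (calB_poly (Suc n)) (of_nat x)
      = poly (pCons 0 (calB_poly n)
              + smult (1 / real (Suc n)) (bernpoly (Suc n) - [:bernoulli (Suc n):])) (of_nat x)"
    unfolding poly_calB_poly_Suc sum_powers_eq_sum_Stirling_ffact [symmetric]
    by (simp add: field_simps)
qed

theorem mainTheorem2: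
  fixes n j :: nat
  assumes "1 \<le> n" and "1 \<le> j" and "j \<le> n"
  shows "calB (n + 1) j = calB n (j - 1)
           + real (n choose j) * bernoulli (n + 1 - j) / real (n + 1 - j)"
proof -
  obtain i where j: "j = Suc i"
    using assms(2) by (cases j) auto
  have "calB (n + 1) j
      = calB n (j - 1) + real (n + 1 choose j) * bernoulli (n + 1 - j) / real (n + 1)"
    using arg_cong [OF calB_poly_Suc, of "\<lambda>p. coeff p j"]
    by (simp add: j coeff_calB_poly coeff_bernpoly del: binomial_Suc_Suc)
  moreover have "real (n + 1 choose j) / real (n + 1) = real (n choose j) / real (n + 1 - j)"
  proof -
    have "real (n + 1 - j) * real (n + 1 choose j) = real (n + 1) * real (n choose j)"
      using binomial_absorb_comp [of "n + 1" j]
      by (simp only: add_diff_cancel_right' flip: of_nat_mult)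
    moreover have "real (n + 1 - j) \<noteq> 0"
      using assms(3) by simp
    ultimately show ?thesis
      by (simp add: field_simps)
  qed
  ultimately show ?thesis
    by (metis times_divide_eq_left)
qed

end
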